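(* Let $L$ be a hyperbolic saddle of a planar vector field with characteristic number $\lambda<1$ having a separatrix loop, and suppose that inside the loop there is another saddle $I$ whose separatrix winds towards the loop in negative time. Consider an unfolding of this vector field in a generic one-parameter family with parameter $\varepsilon$, and let $\varepsilon_n\to 0$ be the parameter values at which a sparkling saddle connection between $L$ and $I$ making $n$ turns around the vanished loop occurs. Suppose that, in a coordinate $x$ on a semitransversal to the loop (with $x=0$ on the loop), the monodromy map of the saddle loop has the form $\Delta(x)=Cx^\lambda$ and the monodromy map for the perturbed loop has the form $Cx^\lambda+\varepsilon$. Let $B$ be the $x$-coordinate of the point where the semitransversal intersects the separatrix of $I$. Then $$\ln(-\ln\varepsilon_n)=-n\ln\lambda+\beta+\theta\lambda^n+o(\lambda^n),$$ where $\beta=\ln\bigl(\frac{\ln C}{1-\lambda}-\ln B\bigr)$ and $\theta=-e^{-\beta}\frac{\ln C}{1-\lambda}$.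
   Context: The characteristic number of a hyperbolic saddle with eigenvalues $\lambda_-<0<\lambda_+$ is $-\lambda_-/\lambda_+$. *)

theory Defs
  imports Complex_Main "HOL-Library.Landau_Symbols"
begin

definition loop_monodromy :: "real \<Rightarrow> real \<Rightarrow> real \<Rightarrow> real \<Rightarrow> real" where
  "loop_monodromy C lam eps x = C * x powr lam + eps"

text \<open>After the loop breaks (parameter eps > 0) the unstable separatrix of L first crosses
  the semitransversal at x = eps.  A sparkling saddle connection between L and I making n turns
  around the vanished loop occurs iff the n-th iterate of the perturbed monodromy map sends this
  point to the point B where the separatrix of I crosses the semitransversal.\<close>
definition sparkling_connection :: "real \<Rightarrow> real \<Rightarrow> real \<Rightarrow> nat \<Rightarrow> real \<Rightarrow> bool" where
  "sparkling_connection C lam B n eps \<longleftrightarrow> ((loop_monodromy C lam eps) ^^ n) eps = B"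

end

theory Submission
  imports Defs
begin

text \<open>Write K = ln C / (1 - lam). On a logarithmic scale one turn of the perturbed monodromy
  is the affine map ln x \<mapsto> ln C + lam ln x up to an error of order eps^(1 - lam), so the
  connection after n turns gives ln B = (1 - lam^n) K + lam^n ln eps_n + E_n with
  0 \<le> E_n = O(eps_n^(1 - lam)). Thus lam^n (- ln eps_n) = A - lam^n K + E_n with
  A = K - ln B > 0: the quantity - ln eps_n grows like A / lam^n, which makes E_n of order
  exp (- c / lam^n) and hence negligible. Taking logarithms once more,
  ln (- ln eps_n) = - n ln lam + ln A + ln (1 + u_n) with u_n = - (K / A) lam^n + o(lam^n), and
  ln (1 + u_n) - u_n = O(u_n^2).\<close>

lemma loop_monodromy_iterate_ge:
  assumes "0 \<le> C"
  shows "e \<le> (loop_monodromy C lam e ^^ k) e"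
proof (cases k)
  case (Suc j)
  then show ?thesis using assms by (simp add: loop_monodromy_def)
qed simp

lemma ln_loop_monodromy_bounds:
  fixes C lam e x :: real
  assumes "0 < C" "0 \<le> lam" "0 < e" "e \<le> x"
  shows "ln C + lam * ln x \<le> ln (loop_monodromy C lam e x)"
    and "ln (loop_monodromy C lam e x) \<le> ln C + lam * ln x + e powr (1 - lam) / C"
proof -
  define a where "a = C * x powr lam"
  have x: "0 < x" using assms by linarith
  have a: "0 < a" using assms x by (simp add: a_def)
  have ln_a: "ln a = ln C + lam * ln x"
    using assms x by (simp add: a_def ln_mult ln_powr)
  have step: "loop_monodromy C lam e x = a + e"
    by (simp add: a_def loop_monodromy_def)
  show "ln C + lam * ln x \<le> ln (loop_monodromy C lam e x)"
    unfolding step ln_a [symmetric] using a assms by (intro ln_mono) auto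
  have "1 + e / a = (a + e) / a"
    using a by (simp add: field_simps)
  then have "ln (a + e) - ln a = ln (1 + e / a)"
    using a assms by (simp add: ln_div)
  also have "\<dots> \<le> e / a"
    using a assms by (intro ln_add_one_self_le_self) simp
  also have "\<dots> \<le> e / (C * e powr lam)"
    unfolding a_def using assms by (intro divide_left_mono mult_left_mono powr_mono2) auto
  also have "\<dots> = e powr (1 - lam) / C"
    using assms by (simp add: powr_diff)
  finally show "ln (loop_monodromy C lam e x) \<le> ln C + lam * ln x + e powr (1 - lam) / C"
    by (simp add: step ln_a)
qed

lemma ln_loop_monodromy_iterate_bounds:
  fixes C lam e :: real
  assumes lam: "0 < lam" "lam < 1" and C: "0 < C" and e: "0 < e"
  defines "K \<equiv> ln C / (1 - lam)" and "M \<equiv> e powr (1 - lam) / (C * (1 - lam))"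
  shows "(1 - lam ^ k) * K + lam ^ k * ln e \<le> ln ((loop_monodromy C lam e ^^ k) e)"
    and "ln ((loop_monodromy C lam e ^^ k) e) \<le> (1 - lam ^ k) * K + lam ^ k * ln e + M"
proof -
  have ln_C: "ln C = (1 - lam) * K" and M: "e powr (1 - lam) / C = (1 - lam) * M" "0 \<le> M"
    using lam C by (simp_all add: K_def M_def)
  have "(1 - lam ^ k) * K + lam ^ k * ln e \<le> ln ((loop_monodromy C lam e ^^ k) e) \<and>
        ln ((loop_monodromy C lam e ^^ k) e) \<le> (1 - lam ^ k) * K + lam ^ k * ln e + M"
  proof (induction k)
    case 0
    then show ?case using M by simp
  next
    case (Suc k)
    define x where "x = (loop_monodromy C lam e ^^ k) e"
    have "e \<le> x"
      unfolding x_def using C by (intro loop_monodromy_iterate_ge) simp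
    with C lam e have step:
      "ln C + lam * ln x \<le> ln (loop_monodromy C lam e x)"
      "ln (loop_monodromy C lam e x) \<le> ln C + lam * ln x + (1 - lam) * M"
      using ln_loop_monodromy_bounds [of C lam e x] by (simp_all add: M)
    have IH: "(1 - lam ^ k) * K + lam ^ k * ln e \<le> ln x"
             "ln x \<le> (1 - lam ^ k) * K + lam ^ k * ln e + M"
      using Suc.IH by (simp_all add: x_def)
    have "(1 - lam ^ Suc k) * K + lam ^ Suc k * ln e
          = ln C + lam * ((1 - lam ^ k) * K + lam ^ k * ln e)"
      by (simp add: ln_C algebra_simps)
    also have "\<dots> \<le> ln C + lam * ln x"
      using IH(1) lam by (intro add_left_mono mult_left_mono) auto
    finally have lower: "(1 - lam ^ Suc k) * K + lam ^ Suc k * ln e \<le> ln (loop_monodromy C lam e x)"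
      using step(1) by linarith
    have "ln (loop_monodromy C lam e x)
          \<le> ln C + lam * ((1 - lam ^ k) * K + lam ^ k * ln e + M) + (1 - lam) * M"
      using step(2) IH(2) lam mult_left_mono [OF IH(2), of lam] by linarith
    also have "\<dots> = (1 - lam ^ Suc k) * K + lam ^ Suc k * ln e + M"
      by (simp add: ln_C algebra_simps)
    finally show ?case
      using lower by (simp add: x_def)
  qed
  then show "(1 - lam ^ k) * K + lam ^ k * ln e \<le> ln ((loop_monodromy C lam e ^^ k) e)"
    and "ln ((loop_monodromy C lam e ^^ k) e) \<le> (1 - lam ^ k) * K + lam ^ k * ln e + M"
    by simp_all
qed

lemma exp_neg_div_power_smallo:
  fixes lam d :: real
  assumes lam: "0 < lam" "lam < 1" and d: "0 < d"
  shows "(\<lambda>n. exp (- d / lam ^ n)) \<in> o(\<lambda>n. lam ^ n)"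
proof -
  have "exp (- d / lam ^ n) \<le> 2 / d\<^sup>2 * (lam ^ n * lam ^ n)" for n
  proof -
    have pos: "0 < d / lam ^ n" using lam d by simp
    have "(d / lam ^ n)\<^sup>2 / 2 \<le> exp (d / lam ^ n)"
      using exp_lower_Taylor_quadratic [of "d / lam ^ n"] pos by simp
    then have "inverse (exp (d / lam ^ n)) \<le> inverse ((d / lam ^ n)\<^sup>2 / 2)"
      using pos lam d by (intro le_imp_inverse_le) simp_all
    then show ?thesis
      using lam d by (simp add: exp_minus power2_eq_square field_simps)
  qed
  then have "(\<lambda>n. exp (- d / lam ^ n)) \<in> O(\<lambda>n. lam ^ n * lam ^ n)"
    by (intro bigoI [of _ "2 / d\<^sup>2"]) simp
  also have "(\<lambda>n. lam ^ n * lam ^ n) \<in> o(\<lambda>n. lam ^ n)"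
    using lam by (intro smalloI_tendsto) (simp_all add: LIMSEQ_power_zero)
  finally show ?thesis .
qed

lemma ln_one_plus_minus_self_smallo:
  fixes u g :: "'a \<Rightarrow> real"
  assumes u: "u \<in> O[F](g)" and g: "(g \<longlongrightarrow> 0) F"
  shows "(\<lambda>x. ln (1 + u x) - u x) \<in> o[F](g)"
proof -
  have "g \<in> o[F](\<lambda>_. 1)"
    using g by (intro smalloI_tendsto) simp_all
  with u have u_small: "u \<in> o[F](\<lambda>_. 1)"
    by (rule landau_o.big_small_trans)
  then have "(u \<longlongrightarrow> 0) F"
    using smalloD_tendsto [OF u_small] by simp
  then have "eventually (\<lambda>x. \<bar>u x\<bar> \<le> 1 / 2) F"
    using tendsto_iff [THEN iffD1, of u 0 F] by (auto simp: dist_real_def elim!: allE [of _ "1/2"] eventually_mono)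
  moreover have "\<bar>ln (1 + t) - t\<bar> \<le> 2 * \<bar>t * t\<bar>" if "\<bar>t\<bar> \<le> 1 / 2" for t :: real
    using abs_ln_one_plus_x_minus_x_bound [OF that] by (simp add: power2_eq_square)
  ultimately have "(\<lambda>x. ln (1 + u x) - u x) \<in> O[F](\<lambda>x. u x * u x)"
    by (intro bigoI [of _ 2]) (auto elim!: eventually_mono)
  also have "(\<lambda>x. u x * u x) \<in> o[F](\<lambda>x. g x * 1)"
    using u u_small by (rule landau_o.big_small_mult)
  finally show ?thesis by simp
qed

lemma ln_geometric_growth_expansion:
  fixes lam A K M c :: real and y E :: "nat \<Rightarrow> real"
  assumes lam: "0 < lam" "lam < 1" and A: "0 < A" and c: "0 < c"
    and E: "\<And>n. 0 \<le> E n" "\<And>n. E n \<le> M * exp (- c * y n)"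
    and y: "\<And>n. lam ^ n * y n = A - lam ^ n * K + E n"
  shows "(\<lambda>n. ln (y n) - (- real n * ln lam + ln A + - K / A * lam ^ n)) \<in> o(\<lambda>n. lam ^ n)"
proof -
  have pow: "(\<lambda>n. lam ^ n) \<longlonglongrightarrow> 0"
    using lam by (intro LIMSEQ_power_zero) simp
  have "eventually (\<lambda>n. lam ^ n * K < A / 2) sequentially"
    using A by (intro order_tendstoD(2) [of _ 0]) (auto intro: tendsto_mult_left_zero pow)
  then have y_large: "eventually (\<lambda>n. A / 2 \<le> lam ^ n * y n) sequentially"
  proof eventually_elim
    case (elim n)
    then show ?case using y [of n] E(1) [of n] by linarith
  qed
  have M: "0 \<le> M"
    using order_trans [OF E(1) E(2), of 0] by (simp add: zero_le_mult_iff)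
  have "E \<in> O(\<lambda>n. exp (- (c * A / 2) / lam ^ n))"
  proof (intro bigoI [of _ M])
    show "eventually (\<lambda>n. norm (E n) \<le> M * norm (exp (- (c * A / 2) / lam ^ n))) sequentially"
      using y_large
    proof eventually_elim
      case (elim n)
      have "A / 2 / lam ^ n \<le> y n"
        using elim lam by (simp add: pos_divide_le_eq mult.commute)
      then have "c * (A / 2 / lam ^ n) \<le> c * y n"
        using c by (intro mult_left_mono) simp_all
      then have "M * exp (- c * y n) \<le> M * exp (- (c * A / 2) / lam ^ n)"
        using M by (intro mult_left_mono) simp_all
      then show ?case
        using E(1) [of n] E(2) [of n] by simp
    qed
  qed
  also have "(\<lambda>n. exp (- (c * A / 2) / lam ^ n)) \<in> o(\<lambda>n. lam ^ n)"
    using lam A c by (intro exp_neg_div_power_smallo) simp_all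
  finally have E_small: "E \<in> o(\<lambda>n. lam ^ n)" .
  define u where "u n = (E n - lam ^ n * K) / A" for n
  have "u \<in> O(\<lambda>n. lam ^ n)"
    unfolding u_def using A landau_o.small_imp_big [OF E_small]
    by (simp add: sum_in_bigo)
  then have remainder_small: "(\<lambda>n. ln (1 + u n) - u n) \<in> o(\<lambda>n. lam ^ n)"
    using pow by (rule ln_one_plus_minus_self_smallo)
  have expansion: "eventually (\<lambda>n. ln (y n) - (- real n * ln lam + ln A + - K / A * lam ^ n)
                        = (ln (1 + u n) - u n) + E n / A) sequentially"
    using y_large
  proof eventually_elim
    case (elim n)
    have "A * (1 + u n) = A + E n - lam ^ n * K"
      using A by (simp add: u_def distrib_left)
    then have scaled: "lam ^ n * y n = A * (1 + u n)"
      using y [of n] by simp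
    have pos: "0 < lam ^ n * y n"
      using elim A by linarith
    then have "0 < y n"
      using lam by (simp add: zero_less_mult_iff)
    moreover have "0 < 1 + u n"
      using pos A by (simp add: scaled zero_less_mult_iff)
    ultimately have "ln (y n) = ln A + ln (1 + u n) - real n * ln lam"
      using ln_mult [of "lam ^ n" "y n"] ln_mult [of A "1 + u n"] A lam
      by (simp add: scaled ln_realpow)
    moreover have "u n = E n / A - K / A * lam ^ n"
      by (simp add: u_def diff_divide_distrib)
    ultimately show ?case
      by simp
  qed
  have "(\<lambda>n. E n / A) \<in> o(\<lambda>n. lam ^ n)"
    using E_small A by simp
  with remainder_small have "(\<lambda>n. (ln (1 + u n) - u n) + E n / A) \<in> o(\<lambda>n. lam ^ n)"
    by (rule sum_in_smallo)
  then show ?thesis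
    using landau_o.small.in_cong [OF expansion] by (simp only:)
qed

theorem lemma1:
  fixes lam C B :: real and eps :: "nat \<Rightarrow> real"
  assumes "0 < lam" and "lam < 1"
    and "0 < C" and "0 < B"
    and "B < C powr (1 / (1 - lam))"
    and "\<And>n. 0 < eps n"
    and "eps \<longlonglongrightarrow> 0"
    and "\<And>n. sparkling_connection C lam B n (eps n)"
  shows "let \<beta> = ln (ln C / (1 - lam) - ln B);
             \<theta> = - exp (- \<beta>) * (ln C / (1 - lam))
         in (\<lambda>n. ln (- ln (eps n)) - (- real n * ln lam + \<beta> + \<theta> * lam ^ n))
              \<in> o(\<lambda>n. lam ^ n)"
proof -
  note lam = assms(1,2) and C = assms(3) and eps = assms(6)
  define K where "K = ln C / (1 - lam)"
  define A where "A = K - ln B"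
  define E where "E n = ln B - ((1 - lam ^ n) * K + lam ^ n * ln (eps n))" for n
  have "ln B < ln (C powr (1 / (1 - lam)))"
    using assms(3-5) by (subst ln_less_cancel_iff) auto
  then have A_pos: "0 < A"
    using C by (simp add: A_def K_def ln_powr)
  have E_bounds: "0 \<le> E n" "E n \<le> 1 / (C * (1 - lam)) * exp (- (1 - lam) * (- ln (eps n)))" for n
  proof -
    have "eps n powr (1 - lam) = exp (- (1 - lam) * (- ln (eps n)))"
      using eps [of n] by (simp add: powr_def algebra_simps)
    then show "0 \<le> E n" "E n \<le> 1 / (C * (1 - lam)) * exp (- (1 - lam) * (- ln (eps n)))"
      using ln_loop_monodromy_iterate_bounds [OF lam C eps [of n], of n] assms(8) [of n]
      by (simp_all add: sparkling_connection_def E_def K_def)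
  qed
  have scaled: "lam ^ n * (- ln (eps n)) = A - lam ^ n * K + E n" for n
    by (simp add: A_def E_def algebra_simps)
  have \<beta>: "ln (ln C / (1 - lam) - ln B) = ln A"
    by (simp add: A_def K_def)
  have \<theta>: "- exp (- ln A) * (ln C / (1 - lam)) = - K / A"
    using A_pos by (simp add: exp_minus K_def field_simps)
  show ?thesis
    unfolding Let_def \<beta> \<theta>
    by (rule ln_geometric_growth_expansion [OF lam A_pos _ E_bounds scaled]) (use lam in simp)
qed

end
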